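(* There exist partition exchange economies with cycle bound $\Delta=3$ and arbitrarily large $|V|$ whose $\big(\tfrac{|V|}{10}-1\big)$-supplemented core is empty.
   Context: A partition exchange economy consists of organizations $N=\{1,\dots,n\}$; pairwise disjoint finite sets $V^1,\dots,V^n$, $V=\bigcup_iV^i$; patient sets $U^i\subseteq V^i$; a directed compatibility graph $\mathcal G=(V,E)$; and a cycle bound $\Delta$. An exchange among $W\subseteq V$ is a set of vertex-disjoint directed cycles of length at most $\Delta$ in $\mathcal G[W]$; $u_i(\mathcal E)$ is the number of vertices of $U^i$ lying on cycles of $\mathcal E$. Given a finite set $V^0$ of new vertices (additional altruistic donors, in no organization), $\mathcal G^{+V^0}$ adds these vertices, an arc from every other vertex into each $a\in V^0$, and for each $a\in V^0$ arcs from $a$ to an arbitrarily chosen set of vertices; exchanges in $\mathcal G^{+V^0}$ are sets of vertex-disjoint cycles of length $\le\Delta$ in it. A nonempty coalition $P\subseteq N$ blocks an exchange $\mathcal E$ if some exchange $\mathcal E'$ among $\bigcup_{i\in P}V^i$ (in $\mathcal G$) has $u_i(\mathcal E')>u_i(\mathcal E)$ for all $i\in P$. An exchange of $\mathcal G^{+V^0}$ blocked by no coalition is in the $V^0$-supplemented core. The $d$-supplemented core is nonempty if for some $V^0$ with $|V^0|\le d$ and some choice of its out-arcs the $V^0$-supplemented core is nonempty; otherwise it is empty. *)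

theory Defs
  imports Main "HOL.Real"
begin

text \<open>An economy is given by the number n of
organizations, the vertex sets Vp i and patient sets Up i (i in {1..n}),
the arc set E of the compatibility graph, and the cycle bound Delta.\<close>

definition all_vertices :: "nat \<Rightarrow> (nat \<Rightarrow> nat set) \<Rightarrow> nat set" where
  "all_vertices n Vp = (\<Union>i\<in>{1..n}. Vp i)"

definition economy ::
  "nat \<Rightarrow> (nat \<Rightarrow> nat set) \<Rightarrow> (nat \<Rightarrow> nat set) \<Rightarrow> (nat \<times> nat) set \<Rightarrow> bool" where
  "economy n Vp Up E \<longleftrightarrow>
     (\<forall>i\<in>{1..n}. finite (Vp i) \<and> Up i \<subseteq> Vp i) \<and>
     (\<forall>i\<in>{1..n}. \<forall>j\<in>{1..n}. i \<noteq> j \<longrightarrow> Vp i \<inter> Vp j = {}) \<and>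
     E \<subseteq> all_vertices n Vp \<times> all_vertices n Vp"

definition is_cycle :: "(nat \<times> nat) set \<Rightarrow> nat set \<Rightarrow> nat \<Rightarrow> nat list \<Rightarrow> bool" where
  "is_cycle E W Delta c \<longleftrightarrow>
     c \<noteq> [] \<and> distinct c \<and> length c \<le> Delta \<and> set c \<subseteq> W \<and>
     (\<forall>k<length c. (c ! k, c ! ((k + 1) mod length c)) \<in> E)"

definition is_exchange :: "(nat \<times> nat) set \<Rightarrow> nat set \<Rightarrow> nat \<Rightarrow> nat list set \<Rightarrow> bool" where
  "is_exchange E W Delta X \<longleftrightarrow>
     (\<forall>c\<in>X. is_cycle E W Delta c) \<and>
     (\<forall>c\<in>X. \<forall>d\<in>X. c \<noteq> d \<longrightarrow> set c \<inter> set d = {})"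

definition covered :: "nat list set \<Rightarrow> nat set" where
  "covered X = (\<Union>c\<in>X. set c)"

definition util :: "(nat \<Rightarrow> nat set) \<Rightarrow> nat \<Rightarrow> nat list set \<Rightarrow> nat" where
  "util Up i X = card (Up i \<inter> covered X)"

text \<open>Coalition P blocks exchange X (exchanges of the coalition use the original graph).\<close>
definition blocks ::
  "nat \<Rightarrow> (nat \<Rightarrow> nat set) \<Rightarrow> (nat \<Rightarrow> nat set) \<Rightarrow> (nat \<times> nat) set \<Rightarrow> nat
    \<Rightarrow> nat set \<Rightarrow> nat list set \<Rightarrow> bool" where
  "blocks n Vp Up E Delta P X \<longleftrightarrow>
     P \<noteq> {} \<and> P \<subseteq> {1..n} \<and>
     (\<exists>X'. is_exchange E (\<Union>i\<in>P. Vp i) Delta X' \<and>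
           (\<forall>i\<in>P. util Up i X' > util Up i X))"

text \<open>The supplemented graph G^{+V0}: F is the chosen set of out-arcs of the new vertices.\<close>
definition supp_arcs ::
  "nat set \<Rightarrow> (nat \<times> nat) set \<Rightarrow> nat set \<Rightarrow> (nat \<times> nat) set \<Rightarrow> (nat \<times> nat) set" where
  "supp_arcs V E V0 F = E \<union> {(v, a). a \<in> V0 \<and> v \<in> V \<union> V0 \<and> v \<noteq> a} \<union> F"

definition supp_core_nonempty_set ::
  "nat \<Rightarrow> (nat \<Rightarrow> nat set) \<Rightarrow> (nat \<Rightarrow> nat set) \<Rightarrow> (nat \<times> nat) set \<Rightarrow> nat
    \<Rightarrow> nat set \<Rightarrow> (nat \<times> nat) set \<Rightarrow> bool" where
  "supp_core_nonempty_set n Vp Up E Delta V0 F \<longleftrightarrow>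
     (\<exists>X. is_exchange (supp_arcs (all_vertices n Vp) E V0 F) (all_vertices n Vp \<union> V0) Delta X \<and>
          \<not> (\<exists>P. blocks n Vp Up E Delta P X))"

definition d_supp_core_nonempty ::
  "nat \<Rightarrow> (nat \<Rightarrow> nat set) \<Rightarrow> (nat \<Rightarrow> nat set) \<Rightarrow> (nat \<times> nat) set \<Rightarrow> nat \<Rightarrow> real \<Rightarrow> bool" where
  "d_supp_core_nonempty n Vp Up E Delta d \<longleftrightarrow>
     (\<exists>V0 F. finite V0 \<and> real (card V0) \<le> d \<and> V0 \<inter> all_vertices n Vp = {} \<and>
            F \<subseteq> V0 \<times> (all_vertices n Vp \<union> V0) \<and>
            supp_core_nonempty_set n Vp Up E Delta V0 F)"

end

theory Submission
  imports Defs
begin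

(* The economy consists of k disjoint copies of a six-vertex gadget with three organizations
   whose only short cycles are three pairwise intersecting triangles, triangle t covering both
   patients of organization t and one patient of organization t + 1 (mod 3). Within one gadget
   every exchange is blocked: if no triangle is used, organizations 0 and 1 block with triangle 0;
   if triangle t is used, organizations t + 1 and t + 2 block with triangle t + 1. A cycle through
   a new vertex has length at most 3, so its old vertices lie in a single gadget; with fewer than
   k new vertices (and |V| / 10 - 1 < k for |V| = 6 k) some gadget is untouched by them, and there
   the exchange is blocked as before. *)

lemma is_cycle_le3_cases:
  assumes "is_cycle E W 3 c"
  obtains x where "c = [x]" "(x, x) \<in> E"
  | x y where "c = [x, y]" "x \<noteq> y" "(x, y) \<in> E" "(y, x) \<in> E"
  | x y z where "c = [x, y, z]" "distinct [x, y, z]" "(x, y) \<in> E" "(y, z) \<in> E" "(z, x) \<in> E"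
proof -
  from assms have "c \<noteq> []" "length c \<le> 3" "distinct c"
    and arc: "\<And>i. i < length c \<Longrightarrow> (c ! i, c ! ((i + 1) mod length c)) \<in> E"
    unfolding is_cycle_def by auto
  then consider x where "c = [x]" | x y where "c = [x, y]" | x y z where "c = [x, y, z]"
    by (cases c; cases "tl c"; cases "tl (tl c)") auto
  then show thesis
  proof cases
    case (1 x)
    have "(x, x) \<in> E" using arc[of 0] 1 by simp
    then show thesis by (rule that(1)[OF 1])
  next
    case (2 x y)
    have "x \<noteq> y" "(x, y) \<in> E" "(y, x) \<in> E"
      using \<open>distinct c\<close> arc[of 0] arc[of 1] 2 by simp_all
    then show thesis by (rule that(2)[OF 2])
  next
    case (3 x y z)
    have "distinct [x, y, z]" "(x, y) \<in> E" "(y, z) \<in> E" "(z, x) \<in> E"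
      using \<open>distinct c\<close> arc[of 0] arc[of 1] arc[of 2] 3 by simp_all
    then show thesis by (rule that(3)[OF 3])
  qed
qed

lemma is_cycle_three_iff:
  "is_cycle E W Delta [x, y, z] \<longleftrightarrow>
     distinct [x, y, z] \<and> 3 \<le> Delta \<and> {x, y, z} \<subseteq> W \<and> (x, y) \<in> E \<and> (y, z) \<in> E \<and> (z, x) \<in> E"
proof -
  have all3: "(\<forall>i<(3::nat). P i) \<longleftrightarrow> P 0 \<and> P (Suc 0) \<and> P (Suc (Suc 0))" for P
    by (auto simp: numeral_3_eq_3 less_Suc_eq)
  have length: "length [x, y, z] = 3" by simp
  show ?thesis unfolding is_cycle_def length all3 by simp
qed

lemma supp_arcs_between_old_vertices:
  assumes "F \<subseteq> V0 \<times> U" "(p, q) \<in> supp_arcs V E V0 F" "p \<notin> V0" "q \<notin> V0"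
  shows "(p, q) \<in> E"
  using assms unfolding supp_arcs_def by auto

lemma is_cycle_supp_arcs_avoiding:
  assumes c: "is_cycle (supp_arcs V E V0 F) W Delta c" and "F \<subseteq> V0 \<times> U" "set c \<inter> V0 = {}"
  shows "is_cycle E W Delta c"
proof -
  have "(c ! i, c ! ((i + 1) mod length c)) \<in> E" if "i < length c" for i
  proof (rule supp_arcs_between_old_vertices)
    show "(c ! i, c ! ((i + 1) mod length c)) \<in> supp_arcs V E V0 F"
      using c that unfolding is_cycle_def by blast
    have "(i + 1) mod length c < length c" using that by (metis mod_less_divisor gr_zeroI less_zeroE)
    then have "c ! i \<in> set c" "c ! ((i + 1) mod length c) \<in> set c"
      using that by (simp_all only: nth_mem)
    then show "c ! i \<notin> V0" "c ! ((i + 1) mod length c) \<notin> V0"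
      using \<open>set c \<inter> V0 = {}\<close> by blast+
  qed fact
  then show ?thesis using c unfolding is_cycle_def by blast
qed

lemma cycle_through_new_vertex_constant:
  assumes "is_cycle A W 3 c" "set c \<inter> V0 \<noteq> {}"
    and local: "\<And>p q. (p, q) \<in> A \<Longrightarrow> p \<notin> V0 \<Longrightarrow> q \<notin> V0 \<Longrightarrow> g p = g q"
    and "u \<in> set c - V0" "w \<in> set c - V0"
  shows "g u = g w"
  using assms(1)
proof (cases rule: is_cycle_le3_cases)
  case (3 x y z)
  then show ?thesis using assms(2,4,5) local[of x y] local[of y z] local[of z x] by auto
qed (use assms(2,4,5) in auto)

lemma exchange_misses_some_block:
  assumes X: "is_exchange A W 3 X" and "finite V0" "card V0 < k"
    and local: "\<And>p q. (p, q) \<in> A \<Longrightarrow> p \<notin> V0 \<Longrightarrow> q \<notin> V0 \<Longrightarrow> g p = g q"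
  obtains j where "j < k"
    "\<And>c v. c \<in> X \<Longrightarrow> v \<in> set c - V0 \<Longrightarrow> g v = j \<Longrightarrow> set c \<inter> V0 = {}"
proof -
  have disjoint: "\<And>c d. c \<in> X \<Longrightarrow> d \<in> X \<Longrightarrow> c \<noteq> d \<Longrightarrow> set c \<inter> set d = {}"
    using X unfolding is_exchange_def by blast
  define Y where "Y = {c \<in> X. set c \<inter> V0 \<noteq> {}}"
  have "\<forall>c\<in>Y. \<exists>a. a \<in> set c \<inter> V0" unfolding Y_def by blast
  then obtain new where new: "\<And>c. c \<in> Y \<Longrightarrow> new c \<in> set c \<inter> V0" by metis
  have inj: "inj_on new Y"
  proof (rule inj_onI)
    fix c d assume "c \<in> Y" "d \<in> Y" "new c = new d"
    then have "new c \<in> set c \<inter> set d" using new[of c] new[of d] by simp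
    then show "c = d" using disjoint \<open>c \<in> Y\<close> \<open>d \<in> Y\<close> unfolding Y_def by blast
  qed
  have into: "new ` Y \<subseteq> V0" using new by blast
  have "finite Y" by (rule inj_on_finite[OF inj into \<open>finite V0\<close>])
  have "card Y \<le> card V0" by (rule card_inj_on_le[OF inj into \<open>finite V0\<close>])
  define block where "block c = g (SOME v. v \<in> set c - V0)" for c
  have block: "g v = block c" if "c \<in> Y" "v \<in> set c - V0" for c v
  proof -
    have some: "(SOME v. v \<in> set c - V0) \<in> set c - V0"
      using that(2) by (rule someI)
    have "is_cycle A W 3 c" "set c \<inter> V0 \<noteq> {}"
      using that(1) X unfolding Y_def is_exchange_def by auto
    then show ?thesis
      unfolding block_def using local that(2) some by (rule cycle_through_new_vertex_constant)
  qed
  have "card (block ` Y) < card {..<k}"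
    using card_image_le[OF \<open>finite Y\<close>, of block] \<open>card Y \<le> card V0\<close> \<open>card V0 < k\<close> by simp
  then obtain j where "j < k" "j \<notin> block ` Y"
    using card_mono[OF finite_imageI[OF \<open>finite Y\<close>], of "{..<k}" block] by force
  then show thesis using that block unfolding Y_def by blast
qed

lemma util_singleton: "util Up i {c} = card (Up i \<inter> set c)"
  unfolding util_def covered_def by simp

lemma blocks_by_cycle_of_pair:
  assumes "i \<in> {1..n}" "i' \<in> {1..n}" "is_cycle E (Vp i \<union> Vp i') Delta c"
    "util Up i X < util Up i {c}" "util Up i' X < util Up i' {c}"
  shows "blocks n Vp Up E Delta {i, i'} X"
proof -
  have "is_exchange E (\<Union>l\<in>{i, i'}. Vp l) Delta {c}"
    using assms(3) unfolding is_exchange_def by simp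
  then show ?thesis using assms unfolding blocks_def by blast
qed

(* Vertex 6 * j + p is position p < 6 of copy j; organization 3 * j + r + 1 owns positions 2 * r
   and 2 * r + 1. *)
definition gadget_arcs :: "(nat \<times> nat) set" where
  "gadget_arcs = {(0, 1), (1, 3), (3, 0), (2, 5), (5, 3), (3, 2), (4, 5), (5, 1), (1, 4)}"

definition gadget_triangle :: "nat \<Rightarrow> nat list" where
  "gadget_triangle t = [[0, 1, 3], [2, 5, 3], [4, 5, 1]] ! (t mod 3)"

definition gadget_cycle :: "nat \<Rightarrow> nat \<Rightarrow> nat list" where
  "gadget_cycle j t = map ((+) (6 * j)) (gadget_triangle t)"

definition copies_arcs :: "nat \<Rightarrow> (nat \<times> nat) set" where
  "copies_arcs k = {(u, v). u < 6 * k \<and> v < 6 * k \<and> u div 6 = v div 6 \<and> (u mod 6, v mod 6) \<in> gadget_arcs}"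

definition org_vertices :: "nat \<Rightarrow> nat set" where
  "org_vertices i = {v. Suc (v div 2) = i}"

definition gadget_org :: "nat \<Rightarrow> nat \<Rightarrow> nat" where
  "gadget_org j t = 3 * j + t mod 3 + 1"

lemma mod_3_cases:
  fixes t :: nat
  obtains "t mod 3 = 0" "(t + 1) mod 3 = 1" "(t + 2) mod 3 = 2"
  | "t mod 3 = 1" "(t + 1) mod 3 = 2" "(t + 2) mod 3 = 0"
  | "t mod 3 = 2" "(t + 1) mod 3 = 0" "(t + 2) mod 3 = 1"
proof -
  have "t mod 3 < 3" by simp
  then consider "t mod 3 = 0" | "t mod 3 = 1" | "t mod 3 = 2" by linarith
  then show thesis using that by cases (simp_all add: mod_Suc)
qed

lemma gadget_arcs_triangle:
  assumes "(p, q) \<in> gadget_arcs" "(q, r) \<in> gadget_arcs" "(r, p) \<in> gadget_arcs"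
  shows "\<exists>t. {p, q, r} = set (gadget_triangle t)"
proof -
  have "(p, q, r) \<in> {(0, 1, 3), (1, 3, 0), (3, 0, 1), (2, 5, 3), (5, 3, 2), (3, 2, 5),
      (4, 5, 1), (5, 1, 4), (1, 4, 5)}"
    using assms unfolding gadget_arcs_def by (elim insertE emptyE; simp)
  then have "{p, q, r} \<in> {{0, 1, 3}, {2, 5, 3}, {4, 5, 1}}"
    by (elim insertE emptyE; simp add: insert_commute)
  then show ?thesis unfolding gadget_triangle_def
    by (elim insertE emptyE) (auto intro: exI[of _ 0] exI[of _ 1] exI[of _ 2])
qed

lemma gadget_arcs_irrefl: "(p, p) \<notin> gadget_arcs"
  unfolding gadget_arcs_def by auto

lemma gadget_arcs_asym: "(p, q) \<in> gadget_arcs \<Longrightarrow> (q, p) \<notin> gadget_arcs"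
  unfolding gadget_arcs_def by (elim insertE emptyE; simp)

lemma copies_arcs_same_block: "(u, v) \<in> copies_arcs k \<Longrightarrow> u div 6 = v div 6"
  unfolding copies_arcs_def by simp

lemma cycle_of_copies_arcs:
  assumes "is_cycle (copies_arcs k) W 3 c"
  shows "\<exists>j<k. \<exists>t. set c = set (gadget_cycle j t)"
  using assms
proof (cases rule: is_cycle_le3_cases)
  case (1 x)
  then show ?thesis using gadget_arcs_irrefl gadget_arcs_asym unfolding copies_arcs_def by auto
next
  case (2 x y)
  then show ?thesis using gadget_arcs_irrefl gadget_arcs_asym unfolding copies_arcs_def by auto
next
  case (3 x y z)
  define j where "j = x div 6"
  have "j < k" "y div 6 = j" "z div 6 = j"
    using 3 unfolding copies_arcs_def j_def by auto
  then have shift: "{x, y, z} = (+) (6 * j) ` {x mod 6, y mod 6, z mod 6}"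
    unfolding j_def by (metis div_mult_mod_eq image_insert image_empty mult.commute)
  obtain t where "{x mod 6, y mod 6, z mod 6} = set (gadget_triangle t)"
    using 3 gadget_arcs_triangle unfolding copies_arcs_def by blast
  then show ?thesis using \<open>j < k\<close> 3 shift unfolding gadget_cycle_def by auto
qed

lemma gadget_cycle_block: "v \<in> set (gadget_cycle j t) \<Longrightarrow> v div 6 = j"
  unfolding gadget_cycle_def gadget_triangle_def by (cases t rule: mod_3_cases) auto

lemma gadget_cycles_intersect: "set (gadget_cycle j t) \<inter> set (gadget_cycle j t') \<noteq> {}"
  unfolding gadget_cycle_def gadget_triangle_def
  by (cases t rule: mod_3_cases; cases t' rule: mod_3_cases) auto

lemma org_vertices_gadget_org:
  "org_vertices (gadget_org j t) = {6 * j + 2 * (t mod 3), 6 * j + 2 * (t mod 3) + 1}"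
  unfolding org_vertices_def gadget_org_def by auto

lemma gadget_org_range: "j < k \<Longrightarrow> gadget_org j t \<in> {1..3 * k}"
  unfolding gadget_org_def by auto

lemma copies_arcs_shift:
  assumes "j < k" "(p, q) \<in> gadget_arcs"
  shows "(6 * j + p, 6 * j + q) \<in> copies_arcs k"
proof -
  have "p < 6" "q < 6" using assms(2) unfolding gadget_arcs_def by auto
  then show ?thesis using assms unfolding copies_arcs_def by simp
qed

lemma gadget_cycle_is_cycle:
  assumes "j < k"
  shows "is_cycle (copies_arcs k) (org_vertices (gadget_org j t) \<union> org_vertices (gadget_org j (t + 1))) 3
           (gadget_cycle j t)"
proof -
  have arcs: "(6 * j + 0, 6 * j + 1) \<in> copies_arcs k" "(6 * j + 1, 6 * j + 3) \<in> copies_arcs k"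
    "(6 * j + 3, 6 * j + 0) \<in> copies_arcs k" "(6 * j + 2, 6 * j + 5) \<in> copies_arcs k"
    "(6 * j + 5, 6 * j + 3) \<in> copies_arcs k" "(6 * j + 3, 6 * j + 2) \<in> copies_arcs k"
    "(6 * j + 4, 6 * j + 5) \<in> copies_arcs k" "(6 * j + 5, 6 * j + 1) \<in> copies_arcs k"
    "(6 * j + 1, 6 * j + 4) \<in> copies_arcs k"
    by (rule copies_arcs_shift[OF assms], simp add: gadget_arcs_def)+
  show ?thesis
    by (cases t rule: mod_3_cases)
      (simp_all add: is_cycle_three_iff gadget_cycle_def gadget_triangle_def org_vertices_gadget_org
         arcs[simplified])
qed

lemma card_org_vertices_inter_gadget_cycle:
  "card (org_vertices (gadget_org j t) \<inter> set (gadget_cycle j t)) = 2"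
  "card (org_vertices (gadget_org j (t + 1)) \<inter> set (gadget_cycle j t)) = 1"
  "card (org_vertices (gadget_org j (t + 2)) \<inter> set (gadget_cycle j t)) = 0"
  by (cases t rule: mod_3_cases;
      simp add: org_vertices_gadget_org gadget_cycle_def gadget_triangle_def)+

lemma covered_gadget_cases:
  assumes disjoint: "\<And>c d. c \<in> X \<Longrightarrow> d \<in> X \<Longrightarrow> c \<noteq> d \<Longrightarrow> set c \<inter> set d = {}"
    and local: "\<And>c v. c \<in> X \<Longrightarrow> v \<in> set c \<Longrightarrow> v div 6 = j \<Longrightarrow> is_cycle (copies_arcs k) W 3 c"
  obtains "covered X \<inter> {v. v div 6 = j} = {}"
  | t where "covered X \<inter> {v. v div 6 = j} = set (gadget_cycle j t)"
proof -
  have gadget: "\<exists>t. set c = set (gadget_cycle j t)" if "c \<in> X" "v \<in> set c" "v div 6 = j" for c v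
    using cycle_of_copies_arcs[OF local[OF that]] gadget_cycle_block that(2,3) by metis
  show thesis
  proof (cases "covered X \<inter> {v. v div 6 = j} = {}")
    case False
    then obtain c v where c: "c \<in> X" "v \<in> set c" "v div 6 = j"
      unfolding covered_def by auto
    then obtain t where t: "set c = set (gadget_cycle j t)"
      using gadget by blast
    have "covered X \<inter> {v. v div 6 = j} = set c"
    proof
      show "covered X \<inter> {v. v div 6 = j} \<subseteq> set c"
      proof
        fix w assume "w \<in> covered X \<inter> {v. v div 6 = j}"
        then obtain d where d: "d \<in> X" "w \<in> set d" "w div 6 = j"
          unfolding covered_def by auto
        then obtain t' where "set d = set (gadget_cycle j t')"
          using gadget by blast
        then have "d = c" using disjoint[OF d(1) c(1)] gadget_cycles_intersect t by metis
        then show "w \<in> set c" using d by simp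
      qed
      show "set c \<subseteq> covered X \<inter> {v. v div 6 = j}"
        using c(1) gadget_cycle_block t unfolding covered_def by auto
    qed
    then show thesis using that(2) t by simp
  qed (rule that(1))
qed

lemma gadget_blocked:
  assumes "j < k"
    and S: "covered X \<inter> {v. v div 6 = j} = {} \<or> (\<exists>s. covered X \<inter> {v. v div 6 = j} = set (gadget_cycle j s))"
  shows "\<exists>P. blocks (3 * k) org_vertices org_vertices (copies_arcs k) 3 P X"
proof -
  let ?S = "covered X \<inter> {v. v div 6 = j}"
  have util: "util org_vertices (gadget_org j t) X = card (org_vertices (gadget_org j t) \<inter> ?S)" for t
  proof -
    have "org_vertices (gadget_org j t) \<subseteq> {v. v div 6 = j}"
      unfolding org_vertices_gadget_org by auto
    then show ?thesis unfolding util_def by (metis Int_assoc inf.absorb_iff2 inf_commute)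
  qed
  obtain t where "util org_vertices (gadget_org j t) X < 2" "util org_vertices (gadget_org j (t + 1)) X < 1"
    using S
  proof
    assume "?S = {}"
    then show thesis using that[of 0] util by simp
  next
    assume "\<exists>s. ?S = set (gadget_cycle j s)"
    then obtain s where "?S = set (gadget_cycle j s)" by blast
    then show thesis
      using that[of "s + 1"] util card_org_vertices_inter_gadget_cycle(2,3)[of j s]
      by (simp add: add.assoc)
  qed
  let ?c = "gadget_cycle j t"
  have "blocks (3 * k) org_vertices org_vertices (copies_arcs k) 3 {gadget_org j t, gadget_org j (t + 1)} X"
  proof (rule blocks_by_cycle_of_pair)
    show "gadget_org j t \<in> {1..3 * k}" "gadget_org j (t + 1) \<in> {1..3 * k}"
      using gadget_org_range[OF \<open>j < k\<close>] by auto
    show "is_cycle (copies_arcs k) (org_vertices (gadget_org j t) \<union> org_vertices (gadget_org j (t + 1))) 3 ?c"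
      using gadget_cycle_is_cycle[OF \<open>j < k\<close>] .
    have "util org_vertices (gadget_org j t) {?c} = 2" "util org_vertices (gadget_org j (t + 1)) {?c} = 1"
      unfolding util_singleton by (rule card_org_vertices_inter_gadget_cycle)+
    then show "util org_vertices (gadget_org j t) X < util org_vertices (gadget_org j t) {?c}"
      "util org_vertices (gadget_org j (t + 1)) X < util org_vertices (gadget_org j (t + 1)) {?c}"
      using \<open>util org_vertices (gadget_org j t) X < 2\<close> \<open>util org_vertices (gadget_org j (t + 1)) X < 1\<close>
      by simp_all
  qed
  then show ?thesis by blast
qed

lemma all_vertices_copies: "all_vertices (3 * k) org_vertices = {..<6 * k}"
  unfolding all_vertices_def org_vertices_def by auto

lemma economy_copies: "economy (3 * k) org_vertices org_vertices (copies_arcs k)"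
proof -
  have "finite (org_vertices i)" for i
    by (rule finite_subset[of _ "{..<2 * i}"]) (auto simp: org_vertices_def)
  moreover have "org_vertices i \<inter> org_vertices i' = {}" if "i \<noteq> i'" for i i'
    using that by (auto simp: org_vertices_def)
  moreover have "copies_arcs k \<subseteq> {..<6 * k} \<times> {..<6 * k}"
    by (auto simp: copies_arcs_def)
  ultimately show ?thesis unfolding economy_def all_vertices_copies by blast
qed

lemma not_d_supp_core_nonempty_copies:
  assumes "d < real k"
  shows "\<not> d_supp_core_nonempty (3 * k) org_vertices org_vertices (copies_arcs k) 3 d"
proof
  assume "d_supp_core_nonempty (3 * k) org_vertices org_vertices (copies_arcs k) 3 d"
  then obtain V0 F X where "finite V0" "real (card V0) \<le> d" "V0 \<inter> {..<6 * k} = {}"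
    and F: "F \<subseteq> V0 \<times> ({..<6 * k} \<union> V0)"
    and X: "is_exchange (supp_arcs {..<6 * k} (copies_arcs k) V0 F) ({..<6 * k} \<union> V0) 3 X"
    and unblocked: "\<not> (\<exists>P. blocks (3 * k) org_vertices org_vertices (copies_arcs k) 3 P X)"
    unfolding d_supp_core_nonempty_def supp_core_nonempty_set_def all_vertices_copies by blast
  have "card V0 < k" using \<open>real (card V0) \<le> d\<close> assms by linarith
  obtain j where "j < k"
    and untouched: "\<And>c v. c \<in> X \<Longrightarrow> v \<in> set c - V0 \<Longrightarrow> v div 6 = j \<Longrightarrow> set c \<inter> V0 = {}"
    using exchange_misses_some_block[OF X \<open>finite V0\<close> \<open>card V0 < k\<close>, of "\<lambda>v. v div 6"]
      supp_arcs_between_old_vertices[OF F] copies_arcs_same_block by blast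
  have "is_cycle (copies_arcs k) ({..<6 * k} \<union> V0) 3 c" if "c \<in> X" "v \<in> set c" "v div 6 = j" for c v
  proof -
    have "v < 6 * k" using \<open>j < k\<close> that(3) by linarith
    then have "set c \<inter> V0 = {}"
      using untouched that \<open>V0 \<inter> {..<6 * k} = {}\<close> by blast
    then show ?thesis
      using is_cycle_supp_arcs_avoiding F X that(1) unfolding is_exchange_def by blast
  qed
  moreover have "\<And>c d. c \<in> X \<Longrightarrow> d \<in> X \<Longrightarrow> c \<noteq> d \<Longrightarrow> set c \<inter> set d = {}"
    using X unfolding is_exchange_def by blast
  ultimately have "covered X \<inter> {v. v div 6 = j} = {} \<or>
      (\<exists>s. covered X \<inter> {v. v div 6 = j} = set (gadget_cycle j s))"
    by (metis covered_gadget_cases)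
  then show False using gadget_blocked[OF \<open>j < k\<close>] unblocked by blast
qed

theorem mainTheorem3:
  shows "\<forall>m::nat. \<exists>n Vp Up E.
     economy n Vp Up E \<and> card (all_vertices n Vp) \<ge> m \<and>
     \<not> d_supp_core_nonempty n Vp Up E 3 (real (card (all_vertices n Vp)) / 10 - 1)"
proof (intro allI exI conjI)
  fix m :: nat
  show "economy (3 * m) org_vertices org_vertices (copies_arcs m)"
    by (rule economy_copies)
  show "m \<le> card (all_vertices (3 * m) org_vertices)"
    unfolding all_vertices_copies by simp
  show "\<not> d_supp_core_nonempty (3 * m) org_vertices org_vertices (copies_arcs m) 3
      (real (card (all_vertices (3 * m) org_vertices)) / 10 - 1)"
    by (rule not_d_supp_core_nonempty_copies) (simp add: all_vertices_copies)
qed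

end
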